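(* Let $k\ge 1$ and $t\ge 2$. Let $\mathbf C$ be the set of all binary linear $t$-CIS $[tk,k]$ codes, and let the symmetric group $S_{tk}$ act on $\mathbf C$ by permuting coordinates. Let $\mathbf C_{sys}$ be the set of all $t$-CIS $[tk,k]$ codes having a generator matrix of the form $(I_k\mid A_1\mid\cdots\mid A_{t-1})$ with all $A_j\in GL(k,2)$. Let $C_1,\dots,C_s$ be representatives of the distinct $S_{tk}$-orbits on $\mathbf C$, each chosen in $\mathbf C_{sys}$. Then $$g_k^{\,t-1}=\sum_{i=1}^s\bigl|\mathrm{Orb}_{S_{tk}}(C_i)\cap\mathbf C_{sys}\bigr|,$$ where $g_k=|GL(k,2)|$ and $\mathrm{Orb}_{S_{tk}}(C_i)$ is the orbit of $C_i$.
   Context: A binary linear $[tk,k]$ code is $t$-CIS if its coordinate set can be partitioned into $t$ pairwise disjoint information sets, an information set being a set of $k$ coordinates whose columns in a generator matrix are linearly independent. $I_k$ is the $k\times k$ identity matrix. *)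

theory Defs
  imports "HOL-Library.Z2" "HOL-Combinatorics.Permutations"
begin

definition bvecs :: "nat \<Rightarrow> (nat \<Rightarrow> bit) set" where
  "bvecs n = {x. \<forall>j\<ge>n. x j = 0}"

definition bmats :: "nat \<Rightarrow> nat \<Rightarrow> (nat \<Rightarrow> nat \<Rightarrow> bit) set" where
  "bmats r c = {M. \<forall>i j. (i \<ge> r \<or> j \<ge> c) \<longrightarrow> M i j = 0}"

definition row_space :: "nat \<Rightarrow> nat \<Rightarrow> (nat \<Rightarrow> nat \<Rightarrow> bit) \<Rightarrow> (nat \<Rightarrow> bit) set" where
  "row_space k n G = {x. \<exists>c. x = (\<lambda>j. \<Sum>i<k. c i * G i j)}"

definition gen_matrix :: "nat \<Rightarrow> nat \<Rightarrow> (nat \<Rightarrow> nat \<Rightarrow> bit) \<Rightarrow> (nat \<Rightarrow> bit) set \<Rightarrow> bool" where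
  "gen_matrix n k G C \<longleftrightarrow> G \<in> bmats k n
     \<and> (\<forall>c. (\<forall>j. (\<Sum>i<k. c i * G i j) = 0) \<longrightarrow> (\<forall>i<k. c i = 0))
     \<and> C = row_space k n G"

definition linear_code :: "nat \<Rightarrow> nat \<Rightarrow> (nat \<Rightarrow> bit) set \<Rightarrow> bool" where
  "linear_code n k C \<longleftrightarrow> (\<exists>G. gen_matrix n k G C)"

definition info_set :: "nat \<Rightarrow> nat \<Rightarrow> (nat \<Rightarrow> bit) set \<Rightarrow> nat set \<Rightarrow> bool" where
  "info_set n k C I \<longleftrightarrow> I \<subseteq> {..<n} \<and> card I = k \<and>
     (\<exists>G. gen_matrix n k G C \<and>
        (\<forall>d. (\<forall>i<k. (\<Sum>j\<in>I. d j * G i j) = 0) \<longrightarrow> (\<forall>j\<in>I. d j = 0)))"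

definition CIS_code :: "nat \<Rightarrow> nat \<Rightarrow> (nat \<Rightarrow> bit) set \<Rightarrow> bool" where
  "CIS_code t k C \<longleftrightarrow> linear_code (t*k) k C \<and>
     (\<exists>P :: nat \<Rightarrow> nat set.
        (\<forall>a<t. info_set (t*k) k C (P a)) \<and>
        (\<forall>a<t. \<forall>b<t. a \<noteq> b \<longrightarrow> P a \<inter> P b = {}) \<and>
        (\<Union>a<t. P a) = {..<t*k})"

definition all_CIS :: "nat \<Rightarrow> nat \<Rightarrow> (nat \<Rightarrow> bit) set set" where
  "all_CIS t k = {C. CIS_code t k C}"

definition id_mat :: "nat \<Rightarrow> nat \<Rightarrow> nat \<Rightarrow> bit" where
  "id_mat k i j = (if i < k \<and> j < k \<and> i = j then 1 else 0)"

definition mat_mult :: "nat \<Rightarrow> (nat \<Rightarrow> nat \<Rightarrow> bit) \<Rightarrow> (nat \<Rightarrow> nat \<Rightarrow> bit) \<Rightarrow> nat \<Rightarrow> nat \<Rightarrow> bit" where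
  "mat_mult k A B i j = (\<Sum>l<k. A i l * B l j)"

definition GL2 :: "nat \<Rightarrow> (nat \<Rightarrow> nat \<Rightarrow> bit) set" where
  "GL2 k = {A \<in> bmats k k. \<exists>B \<in> bmats k k.
       (\<forall>i<k. \<forall>j<k. mat_mult k A B i j = id_mat k i j) \<and>
       (\<forall>i<k. \<forall>j<k. mat_mult k B A i j = id_mat k i j)}"

text \<open>The block matrix (I_k | A_1 | ... | A_{t-1}); column b*k + c is column c of block b.\<close>
definition sys_matrix :: "nat \<Rightarrow> nat \<Rightarrow> (nat \<Rightarrow> nat \<Rightarrow> nat \<Rightarrow> bit) \<Rightarrow> nat \<Rightarrow> nat \<Rightarrow> bit" where
  "sys_matrix t k A i j =
     (if i < k \<and> j < t*k then
        (if j < k then id_mat k i j else A (j div k) i (j mod k))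
      else 0)"

definition sys_CIS :: "nat \<Rightarrow> nat \<Rightarrow> (nat \<Rightarrow> bit) set set" where
  "sys_CIS t k = {C. CIS_code t k C \<and>
     (\<exists>A. (\<forall>b\<in>{1..<t}. A b \<in> GL2 k) \<and> gen_matrix (t*k) k (sys_matrix t k A) C)}"

definition perm_code :: "(nat \<Rightarrow> nat) \<Rightarrow> (nat \<Rightarrow> bit) set \<Rightarrow> (nat \<Rightarrow> bit) set" where
  "perm_code \<sigma> C = (\<lambda>x. x \<circ> inv \<sigma>) ` C"

definition orbit_Sn :: "nat \<Rightarrow> (nat \<Rightarrow> bit) set \<Rightarrow> (nat \<Rightarrow> bit) set set" where
  "orbit_Sn n C = {perm_code \<sigma> C | \<sigma>. \<sigma> permutes {..<n}}"

end

theory Submission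
  imports Defs
begin

text \<open>A systematic generator matrix (I_k | A_1 | ... | A_(t-1)) is determined by the code it
  generates: the identity block forces the coefficients expressing its rows in terms of the rows
  of another systematic generator matrix. Hence systematic t-CIS codes correspond bijectively to
  (t-1)-tuples in GL(k,2), so there are g_k^(t-1) of them. Each of them is a t-CIS code and thus
  lies in exactly one orbit of a representative; counting them orbit by orbit gives the sum.\<close>

lemma UNIV_bit: "(UNIV::bit set) = {0, 1}"
  using bit.exhaust by auto

lemma finite_bvecs: "finite (bvecs n)"
proof -
  have "finite (UNIV::bit set)"
    by (simp add: UNIV_bit)
  moreover have "bvecs n = {f. \<forall>x. (x \<in> {..<n} \<longrightarrow> f x \<in> (UNIV::bit set)) \<and> (x \<notin> {..<n} \<longrightarrow> f x = 0)}"
    unfolding bvecs_def by auto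
  ultimately show ?thesis
    using finite_set_of_finite_funs[of "{..<n}" "UNIV::bit set" 0] by simp
qed

lemma finite_bmats: "finite (bmats r c)"
proof (rule finite_subset)
  show "bmats r c \<subseteq> {M. \<forall>i. (i \<in> {..<r} \<longrightarrow> M i \<in> bvecs c) \<and> (i \<notin> {..<r} \<longrightarrow> M i = (\<lambda>_. 0))}"
    unfolding bmats_def bvecs_def by auto
  show "finite {M. \<forall>i. (i \<in> {..<r} \<longrightarrow> M i \<in> bvecs c) \<and> (i \<notin> {..<r} \<longrightarrow> M i = (\<lambda>_. 0))}"
    by (rule finite_set_of_finite_funs) (auto simp: finite_bvecs)
qed

lemma finite_GL2: "finite (GL2 k)"
  using finite_bmats[of k k] unfolding GL2_def by (rule finite_subset[rotated]) auto

lemma sum_id_mat_right: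
  assumes "j < k"
  shows "(\<Sum>i<k. c i * id_mat k i j) = c j"
proof -
  have "(\<Sum>i<k. c i * id_mat k i j) = (\<Sum>i<k. if j = i then c i else 0)"
    by (rule sum.cong) (auto simp: id_mat_def)
  then show ?thesis
    using assms by (simp only: sum.delta finite_lessThan) simp
qed

lemma sum_id_mat_left:
  assumes "i < k"
  shows "(\<Sum>l<k. id_mat k i l * e l) = e i"
proof -
  have "(\<Sum>l<k. id_mat k i l * e l) = (\<Sum>l<k. if i = l then e l else 0)"
    by (rule sum.cong) (auto simp: id_mat_def)
  then show ?thesis
    using assms by (simp only: sum.delta finite_lessThan) simp
qed

lemma GL2_mult_vec_eq_0:
  assumes "A \<in> GL2 k" and Ae: "\<forall>i<k. (\<Sum>c<k. A i c * e c) = 0" and "c < k"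
  shows "e c = 0"
proof -
  from assms(1) obtain B where BA: "\<forall>i<k. \<forall>j<k. mat_mult k B A i j = id_mat k i j"
    unfolding GL2_def by auto
  have "e c = (\<Sum>l<k. id_mat k c l * e l)"
    using sum_id_mat_left[OF \<open>c < k\<close>] by simp
  also have "\<dots> = (\<Sum>l<k. (\<Sum>m<k. B c m * A m l) * e l)"
    using BA \<open>c < k\<close> by (intro sum.cong refl) (metis lessThan_iff mat_mult_def)
  also have "\<dots> = (\<Sum>m<k. B c m * (\<Sum>l<k. A m l * e l))"
  proof -
    have "(\<Sum>l<k. (\<Sum>m<k. B c m * A m l) * e l) = (\<Sum>l<k. \<Sum>m<k. B c m * (A m l * e l))"
      by (simp only: sum_distrib_right mult.assoc)
    also have "\<dots> = (\<Sum>m<k. \<Sum>l<k. B c m * (A m l * e l))"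
      by (rule sum.swap)
    finally show ?thesis
      by (simp only: sum_distrib_left)
  qed
  also have "\<dots> = 0"
    using Ae by (intro sum.neutral ballI) simp
  finally show ?thesis .
qed

lemma perm_code_id: "perm_code id C = C"
  unfolding perm_code_def by simp

lemma perm_code_comp:
  assumes "\<sigma> permutes S" "\<tau> permutes S"
  shows "perm_code \<sigma> (perm_code \<tau> C) = perm_code (\<sigma> \<circ> \<tau>) C"
proof -
  have "inv (\<sigma> \<circ> \<tau>) = inv \<tau> \<circ> inv \<sigma>"
    using assms by (simp add: o_inv_distrib permutes_bij bij_is_inj bij_is_surj)
  then show ?thesis
    unfolding perm_code_def image_image by (simp add: comp_assoc)
qed

lemma orbit_Sn_trans:
  assumes "D \<in> orbit_Sn n C" "E \<in> orbit_Sn n D"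
  shows "E \<in> orbit_Sn n C"
proof -
  obtain \<sigma> \<tau> where "\<sigma> permutes {..<n}" "D = perm_code \<sigma> C" "\<tau> permutes {..<n}" "E = perm_code \<tau> D"
    using assms unfolding orbit_Sn_def by auto
  then have "\<tau> \<circ> \<sigma> permutes {..<n}" "E = perm_code (\<tau> \<circ> \<sigma>) C"
    using permutes_compose perm_code_comp by blast+
  then show ?thesis
    unfolding orbit_Sn_def by blast
qed

lemma orbit_Sn_sym:
  assumes "D \<in> orbit_Sn n C"
  shows "C \<in> orbit_Sn n D"
proof -
  obtain \<sigma> where \<sigma>: "\<sigma> permutes {..<n}" "D = perm_code \<sigma> C"
    using assms unfolding orbit_Sn_def by auto
  then have "inv \<sigma> permutes {..<n}"
    using permutes_inv by blast
  moreover have "perm_code (inv \<sigma>) D = C"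
    using \<sigma> \<open>inv \<sigma> permutes {..<n}\<close> perm_code_comp permutes_inv_o(2) perm_code_id by metis
  ultimately show ?thesis
    unfolding orbit_Sn_def by blast
qed

lemma orbit_Sn_eq: "D \<in> orbit_Sn n C \<Longrightarrow> orbit_Sn n D = orbit_Sn n C"
  using orbit_Sn_trans orbit_Sn_sym by blast

lemma orbit_Sn_disjoint:
  assumes "orbit_Sn n C1 \<noteq> orbit_Sn n C2"
  shows "orbit_Sn n C1 \<inter> orbit_Sn n C2 = {}"
proof (rule ccontr)
  assume "orbit_Sn n C1 \<inter> orbit_Sn n C2 \<noteq> {}"
  then obtain D where "D \<in> orbit_Sn n C1" "D \<in> orbit_Sn n C2"
    by blast
  then show False
    using orbit_Sn_eq assms by metis
qed

lemma card_eq_sum_card_orbit_Sn_Int: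
  assumes "finite S" "finite R"
    and cover: "\<forall>C\<in>S. \<exists>C'\<in>R. C \<in> orbit_Sn n C'"
    and distinct: "\<forall>C1\<in>R. \<forall>C2\<in>R. C1 \<noteq> C2 \<longrightarrow> orbit_Sn n C1 \<noteq> orbit_Sn n C2"
  shows "card S = (\<Sum>C\<in>R. card (orbit_Sn n C \<inter> S))"
proof -
  have "S = (\<Union>C\<in>R. orbit_Sn n C \<inter> S)"
    using cover by blast
  moreover have "(orbit_Sn n C1 \<inter> S) \<inter> (orbit_Sn n C2 \<inter> S) = {}"
    if "C1 \<in> R" "C2 \<in> R" "C1 \<noteq> C2" for C1 C2
    using orbit_Sn_disjoint[of n C1 C2] that distinct by blast
  ultimately show ?thesis
    using card_UN_disjoint[of R "\<lambda>C. orbit_Sn n C \<inter> S"] assms(1,2) by simp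
qed

lemma sys_matrix_first_block:
  assumes "t \<ge> 1" "i < k" "j < k"
  shows "sys_matrix t k A i j = id_mat k i j"
proof -
  have "j < t * k"
    using assms by (metis less_le_trans mult_1 mult_le_mono1)
  then show ?thesis
    using assms unfolding sys_matrix_def by simp
qed

lemma block_upper_bound: "a < t \<Longrightarrow> a * k + k \<le> t * (k::nat)"
  by (metis add.commute mult_Suc mult_le_mono1 Suc_leI)

lemma sys_matrix_block:
  assumes "1 \<le> a" "a < t" "i < k" "c < k"
  shows "sys_matrix t k A i (a * k + c) = A a i c"
proof -
  have "a * k + c < t * k"
    using block_upper_bound[OF \<open>a < t\<close>, of k] \<open>c < k\<close> by linarith
  moreover have "\<not> a * k + c < k"
    using assms by (metis le_add1 mult_1 mult_le_mono1 not_le order_trans)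
  ultimately show ?thesis
    using assms unfolding sys_matrix_def by simp
qed

lemma gen_matrix_sys_matrix:
  assumes "t \<ge> 1"
  shows "gen_matrix (t * k) k (sys_matrix t k A) (row_space k (t * k) (sys_matrix t k A))"
  unfolding gen_matrix_def
proof (intro conjI allI impI refl)
  show "sys_matrix t k A \<in> bmats k (t * k)"
    unfolding bmats_def sys_matrix_def by auto
next
  fix c i
  assume "\<forall>j. (\<Sum>i<k. c i * sys_matrix t k A i j) = 0" "i < k"
  moreover have "(\<Sum>l<k. c l * sys_matrix t k A l i) = c i"
    using sys_matrix_first_block[OF assms _ \<open>i < k\<close>] sum_id_mat_right[OF \<open>i < k\<close>] by simp
  ultimately show "c i = 0"
    by metis
qed

lemma blocks_disjoint:
  fixes a b k :: nat
  assumes "a \<noteq> b"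
  shows "{a * k..<a * k + k} \<inter> {b * k..<b * k + k} = {}"
proof -
  have "{a * k..<a * k + k} \<inter> {b * k..<b * k + k} = {}" if "a < b" for a b
    using block_upper_bound[OF that, of k] by auto
  then show ?thesis
    using assms by (metis inf_commute nat_neq_iff)
qed

lemma UN_blocks:
  fixes t k :: nat
  assumes "k \<ge> 1"
  shows "(\<Union>a<t. {a * k..<a * k + k}) = {..<t * k}"
proof
  show "(\<Union>a<t. {a * k..<a * k + k}) \<subseteq> {..<t * k}"
  proof (rule UN_least)
    fix a
    assume "a \<in> {..<t}"
    then show "{a * k..<a * k + k} \<subseteq> {..<t * k}"
      using block_upper_bound[of a t k] by auto
  qed
next
  show "{..<t * k} \<subseteq> (\<Union>a<t. {a * k..<a * k + k})"
  proof
    fix x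
    assume "x \<in> {..<t * k}"
    then have "x div k < t"
      by (simp add: less_mult_imp_div_less)
    moreover have "x div k * k \<le> x" "x < x div k * k + k"
      using assms div_mult_mod_eq[of x k] mod_less_divisor[of k x] by linarith+
    ultimately show "x \<in> (\<Union>a<t. {a * k..<a * k + k})"
      by (intro UN_I[of "x div k"]) auto
  qed
qed

lemma sum_block_shift:
  fixes f :: "nat \<Rightarrow> 'a::comm_monoid_add"
  shows "(\<Sum>j\<in>{a * k..<a * k + k}. f j) = (\<Sum>c<k. f (a * k + c))"
  using sum.atLeastLessThan_shift_bounds[where g = f and m = 0 and k = "a * k" and n = k]
  by (simp add: add.commute lessThan_atLeast0 comp_def)

lemma info_set_block:
  assumes t: "t \<ge> 1" and k: "k \<ge> 1" and GL: "\<forall>b\<in>{1..<t}. A b \<in> GL2 k" and "a < t"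
  shows "info_set (t * k) k (row_space k (t * k) (sys_matrix t k A)) {a * k..<a * k + k}"
  unfolding info_set_def
proof (intro conjI exI allI impI ballI)
  show "{a * k..<a * k + k} \<subseteq> {..<t * k}"
    using UN_blocks[OF k, of t] \<open>a < t\<close> by blast
  show "card {a * k..<a * k + k} = k"
    by simp
  show "gen_matrix (t * k) k (sys_matrix t k A) (row_space k (t * k) (sys_matrix t k A))"
    by (rule gen_matrix_sys_matrix[OF t])
next
  fix d j
  assume d: "\<forall>i<k. (\<Sum>j\<in>{a * k..<a * k + k}. d j * sys_matrix t k A i j) = 0"
    and j: "j \<in> {a * k..<a * k + k}"
  define e where "e c = d (a * k + c)" for c
  have e: "(\<Sum>c<k. e c * sys_matrix t k A i (a * k + c)) = 0" if "i < k" for i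
    using d that sum_block_shift[of "\<lambda>j. d j * sys_matrix t k A i j" a k] by (simp add: e_def)
  have "e c = 0" if "c < k" for c
  proof (cases "a = 0")
    case True
    have "sys_matrix t k A c (a * k + l) = id_mat k l c" if "l < k" for l
      using sys_matrix_first_block[OF t \<open>c < k\<close> that] True by (auto simp: id_mat_def)
    then have "(\<Sum>l<k. e l * sys_matrix t k A c (a * k + l)) = (\<Sum>l<k. e l * id_mat k l c)"
      by (intro sum.cong) simp_all
    then show ?thesis
      using e[OF \<open>c < k\<close>] sum_id_mat_right[OF \<open>c < k\<close>, of e] by simp
  next
    case False
    have "(\<Sum>l<k. A a i l * e l) = (\<Sum>l<k. e l * sys_matrix t k A i (a * k + l))" if "i < k" for i
      using sys_matrix_block[of a t i k] False \<open>a < t\<close> that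
      by (intro sum.cong) (simp_all add: mult.commute)
    then have "(\<Sum>l<k. A a i l * e l) = 0" if "i < k" for i
      using e that by simp
    then show ?thesis
      using GL2_mult_vec_eq_0[of "A a" k e c] GL False \<open>a < t\<close> \<open>c < k\<close> by simp
  qed
  moreover have "j = a * k + (j - a * k)" "j - a * k < k"
    using j by auto
  ultimately show "d j = 0"
    unfolding e_def by metis
qed

lemma row_space_sys_matrix_in_sys_CIS:
  assumes t: "t \<ge> 1" and k: "k \<ge> 1" and GL: "\<forall>b\<in>{1..<t}. A b \<in> GL2 k"
  shows "row_space k (t * k) (sys_matrix t k A) \<in> sys_CIS t k"
  unfolding sys_CIS_def CIS_code_def linear_code_def
proof (intro CollectI conjI exI)
  show "gen_matrix (t * k) k (sys_matrix t k A) (row_space k (t * k) (sys_matrix t k A))"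
    by (rule gen_matrix_sys_matrix[OF t])
  then show "gen_matrix (t * k) k (sys_matrix t k A) (row_space k (t * k) (sys_matrix t k A))" .
  show "\<forall>b\<in>{1..<t}. A b \<in> GL2 k"
    by (fact GL)
  show "\<forall>a<t. info_set (t * k) k (row_space k (t * k) (sys_matrix t k A)) {a * k..<a * k + k}"
    using info_set_block[OF t k GL] by blast
  show "\<forall>a<t. \<forall>b<t. a \<noteq> b \<longrightarrow> {a * k..<a * k + k} \<inter> {b * k..<b * k + k} = {}"
    using blocks_disjoint by blast
  show "(\<Union>a<t. {a * k..<a * k + k}) = {..<t * k}"
    by (rule UN_blocks[OF k])
qed

text \<open>Write row i of the first matrix as a combination of rows of the second; on the first
  k columns both matrices are I_k, which forces the coefficients to be the unit vector e_i.\<close>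
lemma sys_matrix_eq_if_row_space_subset:
  assumes t: "t \<ge> 1"
    and sub: "row_space k (t * k) (sys_matrix t k A) \<subseteq> row_space k (t * k) (sys_matrix t k A')"
    and i: "i < k"
  shows "sys_matrix t k A i j = sys_matrix t k A' i j"
proof -
  let ?G = "sys_matrix t k A" and ?G' = "sys_matrix t k A'"
  have "?G i = (\<lambda>j. \<Sum>l<k. id_mat k i l * ?G l j)"
    using sum_id_mat_left[OF i] by simp
  then have "?G i \<in> row_space k (t * k) ?G"
    unfolding row_space_def by blast
  with sub obtain c where c: "?G i = (\<lambda>j. \<Sum>l<k. c l * ?G' l j)"
    unfolding row_space_def by blast
  have "c l = id_mat k i l" if l: "l < k" for l
  proof -
    have "id_mat k i l = (\<Sum>m<k. c m * ?G' m l)"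
      using sys_matrix_first_block[OF t i l] fun_cong[OF c, of l] by simp
    also have "\<dots> = (\<Sum>m<k. c m * id_mat k m l)"
      using sys_matrix_first_block[OF t _ l] by simp
    finally show ?thesis
      using sum_id_mat_right[OF l] by simp
  qed
  then have "(\<Sum>l<k. c l * ?G' l j) = (\<Sum>l<k. id_mat k i l * ?G' l j)"
    by simp
  then show ?thesis
    using fun_cong[OF c, of j] sum_id_mat_left[OF i] by simp
qed

lemma bij_betw_sys_CIS:
  assumes t: "t \<ge> 1" and k: "k \<ge> 1"
  shows "bij_betw (\<lambda>A. row_space k (t * k) (sys_matrix t k A)) (\<Pi>\<^sub>E b\<in>{1..<t}. GL2 k) (sys_CIS t k)"
  unfolding bij_betw_def
proof (intro conjI inj_onI subset_antisym subsetI)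
  fix A A'
  assume A: "A \<in> (\<Pi>\<^sub>E b\<in>{1..<t}. GL2 k)" and A': "A' \<in> (\<Pi>\<^sub>E b\<in>{1..<t}. GL2 k)"
    and eq: "row_space k (t * k) (sys_matrix t k A) = row_space k (t * k) (sys_matrix t k A')"
  show "A = A'"
  proof (rule PiE_ext[OF A A'], rule ext, rule ext)
    fix b i c
    assume b: "b \<in> {1..<t}"
    show "A b i c = A' b i c"
    proof (cases "i < k \<and> c < k")
      case True
      then have "A b i c = sys_matrix t k A i (b * k + c)"
        using sys_matrix_block b by simp
      also have "\<dots> = sys_matrix t k A' i (b * k + c)"
        using sys_matrix_eq_if_row_space_subset[OF t] eq True by blast
      also have "\<dots> = A' b i c"
        using sys_matrix_block b True by simp
      finally show ?thesis .
    next
      case False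
      have "A b \<in> bmats k k" "A' b \<in> bmats k k"
        using A A' b unfolding GL2_def by auto
      then show ?thesis
        using False unfolding bmats_def by auto
    qed
  qed
next
  fix C
  assume "C \<in> (\<lambda>A. row_space k (t * k) (sys_matrix t k A)) ` (\<Pi>\<^sub>E b\<in>{1..<t}. GL2 k)"
  then show "C \<in> sys_CIS t k"
    using row_space_sys_matrix_in_sys_CIS[OF t k] by auto
next
  fix C
  assume "C \<in> sys_CIS t k"
  then obtain A where GL: "\<forall>b\<in>{1..<t}. A b \<in> GL2 k"
    and C: "C = row_space k (t * k) (sys_matrix t k A)"
    unfolding sys_CIS_def gen_matrix_def by blast
  have "j div k \<in> {1..<t}" if "j < t * k" "\<not> j < k" for j
    using that k less_mult_imp_div_less[of j t k] div_le_mono[of k j k] by simp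
  then have "sys_matrix t k (restrict A {1..<t}) = sys_matrix t k A"
    unfolding sys_matrix_def by (intro ext) auto
  moreover have "restrict A {1..<t} \<in> (\<Pi>\<^sub>E b\<in>{1..<t}. GL2 k)"
    using GL by auto
  ultimately show "C \<in> (\<lambda>A. row_space k (t * k) (sys_matrix t k A)) ` (\<Pi>\<^sub>E b\<in>{1..<t}. GL2 k)"
    using C by (metis image_eqI)
qed

lemma card_sys_CIS:
  assumes "t \<ge> 1" "k \<ge> 1"
  shows "card (sys_CIS t k) = card (GL2 k) ^ (t - 1)"
  using bij_betw_same_card[OF bij_betw_sys_CIS[OF assms]] by (simp add: card_PiE)

lemma finite_sys_CIS:
  assumes "t \<ge> 1" "k \<ge> 1"
  shows "finite (sys_CIS t k)"
  using bij_betw_finite[OF bij_betw_sys_CIS[OF assms]] by (simp add: finite_PiE finite_GL2)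

theorem proposition7:
  fixes t k :: nat and R :: "(nat \<Rightarrow> bit) set set"
  assumes "k \<ge> 1" and "t \<ge> 2"
    and "finite R"
    and "R \<subseteq> sys_CIS t k"
    and "\<forall>C\<in>all_CIS t k. \<exists>C'\<in>R. C \<in> orbit_Sn (t*k) C'"
    and "\<forall>C1\<in>R. \<forall>C2\<in>R. C1 \<noteq> C2 \<longrightarrow> orbit_Sn (t*k) C1 \<noteq> orbit_Sn (t*k) C2"
  shows "card (GL2 k) ^ (t - 1) = (\<Sum>C\<in>R. card (orbit_Sn (t*k) C \<inter> sys_CIS t k))"
proof -
  have t: "t \<ge> 1"
    using \<open>t \<ge> 2\<close> by simp
  have "\<forall>C\<in>sys_CIS t k. \<exists>C'\<in>R. C \<in> orbit_Sn (t*k) C'"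
    using assms(5) unfolding sys_CIS_def all_CIS_def by blast
  then have "card (sys_CIS t k) = (\<Sum>C\<in>R. card (orbit_Sn (t*k) C \<inter> sys_CIS t k))"
    using card_eq_sum_card_orbit_Sn_Int finite_sys_CIS[OF t \<open>k \<ge> 1\<close>] \<open>finite R\<close> assms(6) by blast
  then show ?thesis
    using card_sys_CIS[OF t \<open>k \<ge> 1\<close>] by simp
qed

end
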